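(* Let $f:\mathbb{R}^n\to\mathbb{R}$ be a continuous convex function, $X_0\in\mathbb{R}^n$ and $R>0$, and let $B(X_0,R)$ be the open ball centered at $X_0$ of radius $R$. Suppose there exists $\underline{d}>0$ such that for all $X\in B(X_0,R)$ and all $d_X\in\partial f(X)$ one has $\|d_X\|\ge \underline{d}$. Then there exist $X\in B(X_0,R)$ and $d_X\in\partial f(X)$ such that $$X-X_0=-\frac{R}{2}\cdot\frac{d_X}{\|d_X\|}.$$
   Context: $\partial f(X)$ denotes the subdifferential (set of subgradients) of the convex function $f$ at $X$. *)

theory Defs
  imports "HOL-Analysis.Analysis"
begin

definition subdifferential :: "('a::real_inner \<Rightarrow> real) \<Rightarrow> 'a \<Rightarrow> 'a set" where
  "subdifferential f x = {d. \<forall>y. f y \<ge> f x + d \<bullet> (y - x)}"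

end

theory Submission
  imports Defs
begin

text \<open>Let \<open>X\<close> minimise \<open>f\<close> over the closed ball of radius \<open>R/2\<close> about \<open>X\<^sub>0\<close>. Separating the
  epigraph of \<open>f\<close> from the set of points lying strictly below \<open>f X\<close> over that ball yields a
  subgradient \<open>d\<close> at \<open>X\<close> for which \<open>X\<close> also minimises the linear function \<open>d \<bullet> _\<close> on the ball.
  The hypothesis makes \<open>d \<noteq> 0\<close>, and the only minimiser of a nonzero linear function on a ball
  is the boundary point in direction \<open>-d\<close> (equality case of Cauchy-Schwarz).\<close>

lemma convex_on_affine_minorant_above_lower_bound:
  fixes f :: "'a::euclidean_space \<Rightarrow> real"
  assumes f: "convex_on UNIV f" and S: "convex S" "S \<noteq> {}"
    and lower: "\<And>y. y \<in> S \<Longrightarrow> m \<le> f y"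
  obtains c a where "\<And>y. c + a \<bullet> y \<le> f y" "\<And>z. z \<in> S \<Longrightarrow> m \<le> c + a \<bullet> z"
proof -
  have disjoint: "S \<times> {..<m} \<inter> epigraph UNIV f = {}"
    by (auto simp: epigraph_def dest!: lower)
  have nonempty: "S \<times> {..<m} \<noteq> {}" "epigraph UNIV f \<noteq> {}"
    using S(2) by (auto simp: epigraph_def)
  obtain p k where "p \<noteq> 0"
      and below: "\<forall>x \<in> S \<times> {..<m}. p \<bullet> x \<le> k" and above: "\<forall>x \<in> epigraph UNIV f. k \<le> p \<bullet> x"
    using separating_hyperplane_sets[OF convex_Times[OF S(1) convex_real_interval(4)]
        convex_epigraphI[OF f] nonempty disjoint] by blast
  obtain a b where p: "p = (a, b)" by (cases p)
  have epi: "k \<le> a \<bullet> y + b * t" if "f y \<le> t" for y t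
    using above that by (auto simp: p epigraph_def)
  have strict_below: "a \<bullet> z + b * s \<le> k" if "z \<in> S" "s < m" for z s
    using below that by (auto simp: p)
  obtain z0 where z0: "z0 \<in> S" using S(2) by blast
  txt \<open>The separating hyperplane is not vertical, since \<open>f\<close> is finite on the whole space.\<close>
  have "b \<noteq> 0"
  proof
    assume "b = 0"
    then have "a \<noteq> 0" using \<open>p \<noteq> 0\<close> by (simp add: p zero_prod_def)
    have "k \<le> a \<bullet> (z0 - a)" using epi[of "z0 - a" "f (z0 - a)"] \<open>b = 0\<close> by simp
    moreover have "a \<bullet> z0 \<le> k" using strict_below[OF z0, of "m - 1"] \<open>b = 0\<close> by simp
    moreover have "0 < a \<bullet> a" using \<open>a \<noteq> 0\<close> by simp
    ultimately show False by (simp add: inner_diff_right)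
  qed
  moreover have "0 \<le> b"
  proof -
    have "0 \<le> b * (f z0 - (m - 1))"
      using epi[of z0 "f z0"] strict_below[OF z0, of "m - 1"] by (simp add: algebra_simps)
    moreover have "0 < f z0 - (m - 1)"
      using lower[OF z0] by simp
    ultimately show ?thesis by (simp add: zero_le_mult_iff)
  qed
  ultimately have "0 < b" by simp
  show thesis
  proof
    fix y
    show "k / b + (- a /\<^sub>R b) \<bullet> y \<le> f y"
      using epi[of y "f y"] \<open>0 < b\<close> by (simp add: field_simps)
  next
    fix z assume "z \<in> S"
    have "s \<le> (k - a \<bullet> z) / b" if "s < m" for s
      using strict_below[OF \<open>z \<in> S\<close> that] \<open>0 < b\<close> by (simp add: field_simps)
    then have "m \<le> (k - a \<bullet> z) / b" by (rule dense_le)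
    then show "m \<le> k / b + (- a /\<^sub>R b) \<bullet> z"
      using \<open>0 < b\<close> by (simp add: field_simps)
  qed
qed

lemma subgradient_at_constrained_minimum:
  fixes f :: "'a::euclidean_space \<Rightarrow> real"
  assumes "convex_on UNIV f" "convex S" "x \<in> S" and minimal: "\<And>y. y \<in> S \<Longrightarrow> f x \<le> f y"
  obtains d where "d \<in> subdifferential f x" "\<And>z. z \<in> S \<Longrightarrow> d \<bullet> x \<le> d \<bullet> z"
proof -
  have "S \<noteq> {}"
    using \<open>x \<in> S\<close> by blast
  then obtain c a where minorant: "\<And>y. c + a \<bullet> y \<le> f y" and above: "\<And>z. z \<in> S \<Longrightarrow> f x \<le> c + a \<bullet> z"
    using convex_on_affine_minorant_above_lower_bound[OF assms(1,2), of "f x"] minimal by blast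
  have touch: "f x = c + a \<bullet> x"
    using minorant[of x] above[OF \<open>x \<in> S\<close>] by simp
  show thesis
  proof
    show "a \<in> subdifferential f x"
      using minorant touch by (simp add: subdifferential_def inner_diff_right)
    show "a \<bullet> x \<le> a \<bullet> z" if "z \<in> S" for z
      using above[OF that] touch by simp
  qed
qed

lemma linear_minimiser_on_cball:
  fixes d x x0 :: "'a::real_inner"
  assumes "d \<noteq> 0" "x \<in> cball x0 r" and minimal: "\<And>z. z \<in> cball x0 r \<Longrightarrow> d \<bullet> x \<le> d \<bullet> z"
  shows "x - x0 = - (r / norm d) *\<^sub>R d"
proof -
  have x_near: "norm (x0 - x) \<le> r"
    using assms(2) by (simp add: dist_norm)
  then have "0 \<le> r"
    using norm_ge_zero[of "x0 - x"] by linarith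
  then have "x0 - (r / norm d) *\<^sub>R d \<in> cball x0 r"
    using \<open>d \<noteq> 0\<close> by (simp add: dist_norm)
  from minimal[OF this] have "norm d * r \<le> d \<bullet> (x0 - x)"
    using \<open>d \<noteq> 0\<close> by (simp add: inner_diff_right power2_norm_eq_inner[symmetric] power2_eq_square mult.commute)
  moreover have "d \<bullet> (x0 - x) \<le> norm d * norm (x0 - x)"
    by (rule norm_cauchy_schwarz)
  moreover have "norm d * norm (x0 - x) \<le> norm d * r"
    using x_near by (simp add: mult_left_mono)
  ultimately have "d \<bullet> (x0 - x) = norm d * norm (x0 - x)" "norm d * norm (x0 - x) = norm d * r"
    by linarith+
  then have "d \<bullet> (x0 - x) = norm d * norm (x0 - x)" "norm (x0 - x) = r"
    using \<open>d \<noteq> 0\<close> by simp_all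
  then have collinear: "norm d *\<^sub>R (x0 - x) = r *\<^sub>R d"
    using norm_cauchy_schwarz_eq[of d "x0 - x"] by simp
  have "x0 - x = inverse (norm d) *\<^sub>R (norm d *\<^sub>R (x0 - x))"
    using \<open>d \<noteq> 0\<close> by simp
  also have "\<dots> = (r / norm d) *\<^sub>R d"
    unfolding collinear by (simp add: divide_inverse_commute)
  finally show ?thesis by (simp add: algebra_simps)
qed

theorem lemma2p2:
  fixes f :: "real ^ 'n \<Rightarrow> real" and X0 :: "real ^ 'n" and R dlow :: real
  assumes "continuous_on UNIV f"
    and "convex_on UNIV f"
    and "R > 0"
    and "dlow > 0"
    and "\<forall>X \<in> ball X0 R. \<forall>dX \<in> subdifferential f X. norm dX \<ge> dlow"
  shows "\<exists>X \<in> ball X0 R. \<exists>dX \<in> subdifferential f X.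
           X - X0 = - (R / 2) *\<^sub>R ((1 / norm dX) *\<^sub>R dX)"
proof -
  have "cball X0 (R / 2) \<noteq> {}"
    using \<open>R > 0\<close> by simp
  then obtain X where X: "X \<in> cball X0 (R / 2)" and minimal: "\<And>y. y \<in> cball X0 (R / 2) \<Longrightarrow> f X \<le> f y"
    using continuous_attains_inf[OF compact_cball _ continuous_on_subset[OF assms(1) subset_UNIV]] by blast
  obtain d where d: "d \<in> subdifferential f X" and d_minimal: "\<And>z. z \<in> cball X0 (R / 2) \<Longrightarrow> d \<bullet> X \<le> d \<bullet> z"
    using subgradient_at_constrained_minimum[OF assms(2) convex_cball X minimal] by blast
  have "X \<in> ball X0 R"
    using X \<open>R > 0\<close> by simp
  then have "d \<noteq> 0"
    using assms(4,5) d by force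
  then have "X - X0 = - (R / 2) *\<^sub>R ((1 / norm d) *\<^sub>R d)"
    using linear_minimiser_on_cball[OF _ X d_minimal] by simp
  with \<open>X \<in> ball X0 R\<close> d show ?thesis by blast
qed

end
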